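(* Let $p$ be prime, $q$ a power of $p$, $R=\mathbb{F}_q[x^p]$, and $V=\{c':c\in\mathbb{F}_q[x]\}=R\oplus xR\oplus\cdots\oplus x^{p-2}R\subset\mathbb{F}_q[x]$ (a free $R$-module of rank $p-1$). For a nonzero squarefree $Q\in\mathbb{F}_q[x]$ let $\Lambda_Q=Q\mathbb{F}_q[x]\cap V$. Then $\Lambda_Q$ is an $R$-submodule of $V$ of index $[V:\Lambda_Q]=q^{\deg Q}$.
   Context: $c'$ denotes the formal derivative of $c\in\mathbb{F}_q[x]$. *)

theory Defs
  imports "HOL-Computational_Algebra.Polynomial" "HOL-Computational_Algebra.Squarefree"
begin

definition Rxp :: "nat \<Rightarrow> 'a::field poly set" where
  "Rxp p = {r. \<forall>i. coeff r i \<noteq> 0 \<longrightarrow> p dvd i}"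

definition Vder :: "'a::field poly set" where
  "Vder = {pderiv c | c. True}"

definition LambdaQ :: "'a::field poly \<Rightarrow> 'a poly set" where
  "LambdaQ Q = {f \<in> Vder. Q dvd f}"

definition index_in_V :: "'a::field poly set \<Rightarrow> nat" where
  "index_in_V L = card (Vder // {(f, g). f \<in> Vder \<and> g \<in> Vder \<and> f - g \<in> L})"

end

theory Submission
  imports Defs "HOL-Computational_Algebra.Primes"
begin

text \<open>
  Reduction modulo \<open>Q\<close> maps \<open>V\<close> onto the \<open>q\<^bsup>deg Q\<^esup>\<close> residues of degree below \<open>deg Q\<close>,
  and its kernel is \<open>\<Lambda>\<^sub>Q\<close>. Surjectivity is where squarefreeness enters: over the
  perfect field \<open>\<FF>\<^sub>q\<close> a squarefree \<open>Q\<close> is coprime to \<open>Q'\<close>, so \<open>u Q + v Q' = 1\<close>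
  for some \<open>u, v\<close>, and then \<open>(g v Q)' \<equiv> g v Q' \<equiv> g\<close> modulo \<open>Q\<close> for every \<open>g\<close>.
  Multiplication by \<open>r \<in> \<FF>\<^sub>q[x\<^sup>p]\<close> preserves \<open>V\<close> because \<open>r' = 0\<close>.
\<close>

lemma prime_CHAR_finite_field: "prime CHAR('a::{finite,field})"
  by (rule prime_CHAR_semidom[OF finite_imp_CHAR_pos[OF finite_UNIV]])

lemma surj_power_CHAR: "surj (\<lambda>x::'a::{finite,field}. x ^ CHAR('a))"
proof -
  have "inj (\<lambda>x::'a. x ^ CHAR('a))"
  proof (rule injI)
    fix x z :: 'a
    assume eq: "x ^ CHAR('a) = z ^ CHAR('a)"
    have "(x + - z) ^ CHAR('a) = x ^ CHAR('a) + (- z) ^ CHAR('a)"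
      by (rule freshmans_dream[OF prime_CHAR_finite_field refl])
    also have "(- z) ^ CHAR('a) = - (z ^ CHAR('a))"
      by (rule minus_power_prime_CHAR[OF refl prime_CHAR_finite_field])
    finally have "(x - z) ^ CHAR('a) = 0"
      using eq by simp
    then show "x = z"
      by simp
  qed
  then show ?thesis
    by (rule finite_UNIV_inj_surj[OF finite_UNIV])
qed

lemma CHAR_dvd_if_pderiv_eq_0:
  fixes P :: "'a::field poly"
  assumes "pderiv P = 0" and "coeff P i \<noteq> 0"
  shows "CHAR('a) dvd i"
proof (cases i)
  case (Suc n)
  have "of_nat (Suc n) * coeff P (Suc n) = (0::'a)"
    using assms(1) by (metis coeff_pderiv coeff_0)
  then have "of_nat (Suc n) = (0::'a)"
    using assms(2) Suc by simp
  then show ?thesis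
    using Suc of_nat_eq_0_iff_char_dvd by blast
qed simp

lemma pderiv_eq_0_imp_CHAR_power:
  fixes P :: "'a::{finite,field} poly"
  assumes "pderiv P = 0"
  obtains S where "P = S ^ CHAR('a)"
proof -
  define p where "p = CHAR('a)"
  have "p > 0"
    using prime_CHAR_finite_field prime_gt_0_nat unfolding p_def by blast
  obtain root :: "'a \<Rightarrow> 'a" where root: "\<And>y. root y ^ p = y"
    using surj_power_CHAR unfolding p_def by (metis surj_f_inv_f)
  define S where "S = (\<Sum>j\<le>degree P. monom (root (coeff P (j * p))) j)"
  have "S ^ p = (\<Sum>j\<le>degree P. monom (root (coeff P (j * p))) j ^ p)"
    unfolding S_def p_def by (rule freshmans_dream_sum) (simp_all add: prime_CHAR_finite_field)
  also have "\<dots> = (\<Sum>j\<le>degree P. monom (coeff P (j * p)) (j * p))"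
    by (simp add: monom_power root)
  also have "\<dots> = P"
  proof (rule poly_eqI)
    fix i
    have "coeff (\<Sum>j\<le>degree P. monom (coeff P (j * p)) (j * p)) i
        = (\<Sum>j\<le>degree P. if j = i div p \<and> p dvd i then coeff P (j * p) else 0)"
      using \<open>p > 0\<close> by (auto simp: coeff_sum coeff_monom intro!: sum.cong)
    also have "\<dots> = (if p dvd i \<and> i div p \<le> degree P then coeff P i else 0)"
      by (auto simp: sum.delta' intro: sum.neutral)
    also have "\<dots> = coeff P i"
    proof (cases "p dvd i \<and> i div p \<le> degree P")
      case False
      moreover have "i div p \<le> i"
        by simp
      ultimately show ?thesis
        using CHAR_dvd_if_pderiv_eq_0[OF assms, of i] unfolding p_def
        by (metis coeff_eq_0 le_trans not_le)
    qed simp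
    finally show "coeff (\<Sum>j\<le>degree P. monom (coeff P (j * p)) (j * p)) i = coeff P i" .
  qed
  finally show thesis
    using that unfolding p_def by metis
qed

lemma pderiv_eq_0_if_dvd_pderiv:
  fixes P :: "'a::field poly"
  assumes "P dvd pderiv P"
  shows "pderiv P = 0"
proof (rule ccontr)
  assume "pderiv P \<noteq> 0"
  with assms have "degree P \<le> degree (pderiv P)"
    by (rule dvd_imp_degree_le)
  moreover have "degree (pderiv P) \<le> degree P - 1"
    by (rule degree_le) (auto simp: coeff_pderiv coeff_eq_0)
  ultimately have "degree P = 0"
    by simp
  then show False
    using \<open>pderiv P \<noteq> 0\<close> by (auto elim: degree_eq_zeroE)
qed

lemma (in euclidean_ring) bezout_common_divisor:
  "\<exists>u v. (u * a + v * b) dvd a \<and> (u * a + v * b) dvd b"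
proof (induction b arbitrary: a rule: measure_induct_rule[of euclidean_size])
  case (less b a)
  show ?case
  proof (cases "b = 0")
    case True
    then show ?thesis
      by (auto intro: exI[of _ 1])
  next
    case False
    then obtain u v where uv: "(u * b + v * (a mod b)) dvd b" "(u * b + v * (a mod b)) dvd a mod b"
      using less mod_size_less by blast
    have "u * b + v * (a mod b) = v * a + (u - v * (a div b)) * b"
      by (simp add: minus_div_mult_eq_mod[symmetric] algebra_simps)
    moreover have "(u * b + v * (a mod b)) dvd a"
      using uv by (metis div_mult_mod_eq dvd_add dvd_mult)
    ultimately show ?thesis
      using uv(1) by metis
  qed
qed

lemma (in euclidean_ring) coprime_imp_bezout:
  assumes "coprime a b"
  obtains u v where "u * a + v * b = 1"
proof -
  obtain u v where uv: "(u * a + v * b) dvd a" "(u * a + v * b) dvd b"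
    using bezout_common_divisor by blast
  define d where "d = u * a + v * b"
  have "is_unit d"
    using assms uv unfolding d_def by (rule coprime_common_divisor)
  have "(1 div d * u) * a + (1 div d * v) * b = 1 div d * d"
    by (simp add: d_def algebra_simps)
  also have "\<dots> = 1"
    using \<open>is_unit d\<close> by simp
  finally show thesis
    by (rule that)
qed

lemma (in euclidean_ring) prime_elem_if_irreducible:
  assumes "irreducible p"
  shows "prime_elem p"
proof (rule prime_elemI)
  show "p \<noteq> 0" "\<not> is_unit p"
    using assms by (auto simp: irreducible_def)
next
  fix a b
  assume dvd: "p dvd a * b"
  show "p dvd a \<or> p dvd b"
  proof (cases "p dvd a")
    case False
    have "coprime p a"
    proof (rule coprimeI)
      fix d
      assume "d dvd p" "d dvd a"
      then obtain e where "p = d * e"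
        by (auto elim: dvdE)
      then have "is_unit d \<or> is_unit e"
        by (rule irreducibleD[OF assms])
      then show "is_unit d"
        using \<open>p = d * e\<close> \<open>d dvd a\<close> False by (auto simp: mult_unit_dvd_iff)
    qed
    then obtain u v where "u * p + v * a = 1"
      by (rule coprime_imp_bezout)
    then have "b = p * (u * b) + v * (a * b)"
      by (metis mult.assoc mult.commute mult_1 distrib_right)
    then show ?thesis
      using dvd by (metis dvd_add dvd_mult dvd_triv_left)
  qed simp
qed

lemma irreducible_divisor_poly:
  fixes p :: "'a::field poly"
  assumes "p \<noteq> 0" and "\<not> is_unit p"
  shows "\<exists>q. irreducible q \<and> q dvd p"
  using assms
proof (induction "degree p" arbitrary: p rule: less_induct)
  case less
  show ?case
  proof (cases "irreducible p")
    case False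
    then obtain a b where p: "p = a * b" and "\<not> is_unit a" "\<not> is_unit b"
      using less.prems by (auto simp: irreducible_def)
    then have "a \<noteq> 0" "b \<noteq> 0"
      using less.prems by auto
    then have "degree a < degree p"
      using \<open>\<not> is_unit b\<close> unfolding p by (simp add: degree_mult_eq is_unit_iff_degree)
    then obtain q where "irreducible q" "q dvd a"
      using less.hyps \<open>a \<noteq> 0\<close> \<open>\<not> is_unit a\<close> by blast
    then show ?thesis
      unfolding p by (blast intro: dvd_mult2)
  qed auto
qed

lemma squarefree_imp_coprime_pderiv:
  fixes Q :: "'a::{finite,field} poly"
  assumes "squarefree Q"
  shows "coprime Q (pderiv Q)"
proof (rule ccontr)
  assume "\<not> coprime Q (pderiv Q)"
  then obtain C where C: "C dvd Q" "C dvd pderiv Q" "\<not> is_unit C"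
    by (rule not_coprimeE)
  have "C \<noteq> 0"
    using C(1) assms by auto
  then obtain P where P: "irreducible P" "P dvd C"
    using irreducible_divisor_poly C(3) by blast
  then obtain S where Q: "Q = P * S"
    using C(1) by (auto elim: dvd_trans[THEN dvdE])
  have "\<not> P dvd S"
  proof
    assume "P dvd S"
    then have "P ^ 2 dvd Q"
      unfolding Q power2_eq_square by simp
    then show False
      using assms P(1) by (auto dest: squarefreeD simp: irreducible_def)
  qed
  have "P dvd P * pderiv S + S * pderiv P"
    using C(2) P(2) unfolding Q pderiv_mult by (rule dvd_trans[rotated])
  then have "P dvd S * pderiv P"
    by (simp add: dvd_add_right_iff)
  then have "pderiv P = 0"
    using prime_elem_if_irreducible[OF P(1)] \<open>\<not> P dvd S\<close>
    by (auto simp: prime_elem_dvd_mult_iff intro: pderiv_eq_0_if_dvd_pderiv)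
  then obtain R where R: "P = R ^ CHAR('a)"
    by (rule pderiv_eq_0_imp_CHAR_power)
  have "CHAR('a) \<ge> 2"
    using prime_CHAR_finite_field prime_ge_2_nat by blast
  then have "R ^ 2 dvd Q"
    unfolding Q R by (simp add: le_imp_power_dvd dvd_mult2)
  then have "is_unit R"
    by (rule squarefreeD[OF assms])
  then show False
    using P(1) unfolding R by (simp add: irreducible_def is_unit_power_iff)
qed

lemma zero_in_Vder: "0 \<in> Vder"
  unfolding Vder_def by (auto intro: exI[of _ 0])

lemma Vder_add: "f \<in> Vder \<Longrightarrow> g \<in> Vder \<Longrightarrow> f + g \<in> Vder"
  unfolding Vder_def by (auto intro: pderiv_add[symmetric])

lemma Vder_diff: "f \<in> Vder \<Longrightarrow> g \<in> Vder \<Longrightarrow> f - g \<in> Vder"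
  unfolding Vder_def by (auto intro: pderiv_diff[symmetric])

lemma pderiv_eq_0_if_Rxp:
  fixes r :: "'a::field poly"
  assumes "CHAR('a) = p" and "r \<in> Rxp p"
  shows "pderiv r = 0"
proof (rule poly_eqI)
  fix n
  have "coeff r (Suc n) \<noteq> 0 \<Longrightarrow> (of_nat (Suc n) :: 'a) = 0"
    using assms of_nat_eq_0_iff_char_dvd unfolding Rxp_def by blast
  then show "coeff (pderiv r) n = coeff 0 n"
    by (auto simp: coeff_pderiv)
qed

lemma Rxp_mult_Vder:
  fixes r f :: "'a::field poly"
  assumes "CHAR('a) = p" and "r \<in> Rxp p" and "f \<in> Vder"
  shows "r * f \<in> Vder"
proof -
  obtain c where "f = pderiv c"
    using assms(3) unfolding Vder_def by blast
  then have "r * f = pderiv (r * c)"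
    using pderiv_eq_0_if_Rxp[OF assms(1,2)] by (simp add: pderiv_mult)
  then show ?thesis
    unfolding Vder_def by blast
qed

lemma image_mod_Vder:
  fixes Q :: "'a::field poly"
  assumes "coprime Q (pderiv Q)"
  shows "(\<lambda>f. f mod Q) ` Vder = range (\<lambda>f. f mod Q)"
proof -
  obtain u v where uv: "u * Q + v * pderiv Q = 1"
    using assms by (rule coprime_imp_bezout)
  have "g mod Q \<in> (\<lambda>f. f mod Q) ` Vder" for g
  proof (rule image_eqI)
    have "g - pderiv (g * v * Q) = Q * (g * u - pderiv (g * v))"
      using arg_cong[OF uv, of "\<lambda>x. g * x"] by (simp add: pderiv_mult algebra_simps)
    then show "g mod Q = pderiv (g * v * Q) mod Q"
      by (simp add: mod_eq_dvd_iff)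
    show "pderiv (g * v * Q) \<in> Vder"
      unfolding Vder_def by blast
  qed
  then show ?thesis
    by blast
qed

lemma card_quotient_kernel:
  "card (A // {(a, b). a \<in> A \<and> b \<in> A \<and> h a = h b}) = card (h ` A)"
proof -
  let ?fibre = "\<lambda>y. {a \<in> A. h a = y}"
  have "{(a, b). a \<in> A \<and> b \<in> A \<and> h a = h b} `` {a} = ?fibre (h a)" if "a \<in> A" for a
    using that by auto
  then have "A // {(a, b). a \<in> A \<and> b \<in> A \<and> h a = h b} = ?fibre ` h ` A"
    unfolding quotient_def by (auto simp: image_image)
  moreover have "inj_on ?fibre (h ` A)"
    by (rule inj_onI) blast
  ultimately show ?thesis
    by (simp add: card_image)
qed

lemma card_polys_coeff_below:
  "card {r :: 'a::{finite,zero} poly. \<forall>i\<ge>n. coeff r i = 0} = card (UNIV :: 'a set) ^ n"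
proof -
  have "inj_on Poly {xs :: 'a list. length xs = n}"
  proof (rule inj_onI)
    fix xs ys :: "'a list"
    assume "xs \<in> {xs. length xs = n}" "ys \<in> {xs. length xs = n}" "Poly xs = Poly ys"
    then show "xs = ys"
      by (metis (mono_tags) coeff_Poly_eq mem_Collect_eq nth_default_nth nth_equalityI)
  qed
  moreover have "Poly ` {xs. length xs = n} = {r :: 'a poly. \<forall>i\<ge>n. coeff r i = 0}"
  proof (intro equalityI subsetI)
    fix r :: "'a poly"
    assume "r \<in> {r. \<forall>i\<ge>n. coeff r i = 0}"
    then have "r = Poly (map (coeff r) [0..<n])"
      by (intro poly_eqI) (simp add: nth_default_def)
    then show "r \<in> Poly ` {xs. length xs = n}"
      by (intro image_eqI[where x = "map (coeff r) [0..<n]"]) auto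
  qed (auto simp: nth_default_def)
  moreover have "card {xs :: 'a list. length xs = n} = card (UNIV :: 'a set) ^ n"
    using card_lists_length_eq[of "UNIV :: 'a set" n] by simp
  ultimately show ?thesis
    by (metis card_image)
qed

lemma range_mod_poly:
  fixes Q :: "'a::field poly"
  assumes "Q \<noteq> 0"
  shows "range (\<lambda>f. f mod Q) = {r. \<forall>i\<ge>degree Q. coeff r i = 0}"
proof (intro equalityI subsetI)
  fix r
  assume "r \<in> range (\<lambda>f. f mod Q)"
  then obtain f where "r = f mod Q"
    by blast
  then have "r = 0 \<or> degree r < degree Q"
    using degree_mod_less[OF assms, of f] by simp
  then show "r \<in> {r. \<forall>i\<ge>degree Q. coeff r i = 0}"
    by (auto simp: coeff_eq_0)
next
  fix r :: "'a poly"
  assume "r \<in> {r. \<forall>i\<ge>degree Q. coeff r i = 0}"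
  then have "r = 0 \<or> degree r < degree Q"
    using leading_coeff_0_iff[of r] not_le by blast
  then have "r mod Q = r"
    using mod_poly_less by auto
  then show "r \<in> range (\<lambda>f. f mod Q)"
    by (metis rangeI)
qed

theorem mainTheorem16:
  fixes Q :: "'a::{finite, field} poly" and p :: nat
  assumes "prime p" and "CHAR('a) = p"
    and "Q \<noteq> 0" and "squarefree Q"
  shows "LambdaQ Q \<subseteq> Vder
       \<and> 0 \<in> LambdaQ Q
       \<and> (\<forall>f\<in>LambdaQ Q. \<forall>g\<in>LambdaQ Q. f + g \<in> LambdaQ Q \<and> f - g \<in> LambdaQ Q)
       \<and> (\<forall>r\<in>Rxp p. \<forall>f\<in>LambdaQ Q. r * f \<in> LambdaQ Q)
       \<and> index_in_V (LambdaQ Q) = card (UNIV :: 'a set) ^ degree Q"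
proof -
  have kernel: "{(f, g). f \<in> Vder \<and> g \<in> Vder \<and> f - g \<in> LambdaQ Q}
              = {(f, g). f \<in> Vder \<and> g \<in> Vder \<and> f mod Q = g mod Q}"
    unfolding LambdaQ_def using Vder_diff by (auto simp: mod_eq_dvd_iff)
  have "index_in_V (LambdaQ Q) = card (UNIV :: 'a set) ^ degree Q"
    unfolding index_in_V_def kernel card_quotient_kernel
      image_mod_Vder[OF squarefree_imp_coprime_pderiv[OF assms(4)]] range_mod_poly[OF assms(3)]
    by (rule card_polys_coeff_below)
  then show ?thesis
    unfolding LambdaQ_def
    using zero_in_Vder Vder_add Vder_diff Rxp_mult_Vder[OF assms(2)] by auto
qed

end
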